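(* Let $K\in\mathbb{N}$ and let $\tilde{\mathcal{P}}_K$ be the set of all $K$-variate normal distributions $\mathcal{N}_K(\boldsymbol\mu,\boldsymbol\Sigma)$ with $\boldsymbol\mu\in\mathbb{R}^K$ and $\boldsymbol\Sigma$ a $K\times K$ positive definite matrix. Then $-d_{\mathrm{Jeff}}$ is not conditionally positive definite on $\tilde{\mathcal{P}}_K^2$; that is, there exist $n\in\mathbb{N}$, $\boldsymbol y_1,\dots,\boldsymbol y_n\in\tilde{\mathcal{P}}_K$ and $c_1,\dots,c_n\in\mathbb{R}$ with $\sum_{i=1}^n c_i=0$ such that $\sum_{i=1}^n\sum_{j=1}^n c_ic_j\big(-d_{\mathrm{Jeff}}(\boldsymbol y_i,\boldsymbol y_j)\big)<0$.
   Context: For distributions $\boldsymbol y,\boldsymbol y'$ on $\mathbb{R}^K$ with densities $y,y'$, the Kullback–Leibler divergence is $d_{\mathrm{KL}}(\boldsymbol y,\boldsymbol y')=\int y(\boldsymbol z)\log\frac{y(\boldsymbol z)}{y'(\boldsymbol z)}\,\mathrm{d}\boldsymbol z$, and Jeffrey's divergence is $d_{\mathrm{Jeff}}(\boldsymbol y,\boldsymbol y')=d_{\mathrm{KL}}(\boldsymbol y,\boldsymbol y')+d_{\mathrm{KL}}(\boldsymbol y',\boldsymbol y)$. A symmetric function $g$ on $\mathcal{Y}^2$ is conditionally positive definite if $\sum_{i,j}c_ic_jg(\boldsymbol y_i,\boldsymbol y_j)\ge0$ for all finite families $\boldsymbol y_i\in\mathcal{Y}$ and real $c_i$ with $\sum_i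 c_i=0$. *)

theory Defs
  imports "HOL-Analysis.Analysis"
begin

text \<open>A K-variate normal distribution N_K(mu, Sigma) is represented by its parameters
  (mu, Sigma), where the dimension K = CARD('n) is given by a finite index type.\<close>

definition pos_def_matrix :: "real^'n^'n \<Rightarrow> bool" where
  "pos_def_matrix S \<longleftrightarrow> transpose S = S \<and> (\<forall>x. x \<noteq> 0 \<longrightarrow> x \<bullet> (S *v x) > 0)"

definition normal_params :: "((real^'n) \<times> (real^'n^'n)) set" where
  "normal_params = {(mu, S). pos_def_matrix S}"

definition normal_density_mv :: "(real^'n) \<times> (real^'n^'n) \<Rightarrow> real^'n \<Rightarrow> real" where
  "normal_density_mv p z =
     (let mu = fst p; S = snd p in
      exp (- ((z - mu) \<bullet> (matrix_inv S *v (z - mu))) / 2)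
        / sqrt ((2 * pi) ^ CARD('n) * det S))"

definition d_KL :: "(real^'n \<Rightarrow> real) \<Rightarrow> (real^'n \<Rightarrow> real) \<Rightarrow> real" where
  "d_KL y y' = (\<integral>z. y z * ln (y z / y' z) \<partial>lborel)"

definition d_Jeff :: "(real^'n \<Rightarrow> real) \<Rightarrow> (real^'n \<Rightarrow> real) \<Rightarrow> real" where
  "d_Jeff y y' = d_KL y y' + d_KL y' y"

definition cond_pos_def :: "'a set \<Rightarrow> ('a \<Rightarrow> 'a \<Rightarrow> real) \<Rightarrow> bool" where
  "cond_pos_def Y g \<longleftrightarrow>
     (\<forall>n::nat. \<forall>y c. (\<forall>i<n. y i \<in> Y) \<and> (\<Sum>i<n. c i) = (0::real) \<longrightarrow>
        (\<Sum>i<n. \<Sum>j<n. c i * c j * g (y i) (y j)) \<ge> 0)"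

end

theory Submission
  imports Defs "HOL-Probability.Probability"
begin

text \<open>It suffices to look at the centred isotropic normals \<open>N(0, a I)\<close>. Their densities
  factor into one-dimensional normal densities, which gives
  \<open>d_KL(N(0,aI), N(0,bI)) = K/2 (a/b - 1 - ln (a/b))\<close> and hence
  \<open>d_Jeff(N(0,aI), N(0,bI)) = K/2 (a/b + b/a - 2)\<close>. For \<open>a \<in> {1, 2, 4}\<close> and the
  weights \<open>(1, -2, 1)\<close> (a second difference) the quadratic form of \<open>-d_Jeff\<close> equals
  \<open>-K/4 < 0\<close>.\<close>

lemma mat_mult_mat: "(mat a :: 'a::comm_semiring_1^'n^'n) ** mat b = mat (a * b)"
  by (auto simp: vec_eq_iff matrix_matrix_mult_def mat_def mult_delta_left mult_delta_right)

lemma mat_mult_vector: "(mat a :: real^'n^'n) *v x = a *\<^sub>R x"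
  by (auto simp: vec_eq_iff matrix_vector_mult_def mat_def mult_delta_left mult_delta_right)

lemma matrix_inv_mat:
  assumes "a \<noteq> 0"
  shows "matrix_inv (mat a :: 'a::field^'n^'n) = mat (inverse a)"
  unfolding matrix_inv_def
proof (rule some_equality)
  show "mat a ** mat (inverse a) = (mat 1 :: 'a^'n^'n) \<and> mat (inverse a) ** mat a = (mat 1 :: 'a^'n^'n)"
    using assms by (simp add: mat_mult_mat)
next
  fix B :: "'a^'n^'n"
  assume "mat a ** B = mat 1 \<and> B ** mat a = mat 1"
  then have "mat (inverse a) ** (mat a ** B) = mat (inverse a)" by simp
  then show "B = mat (inverse a)"
    using assms by (simp add: matrix_mul_assoc mat_mult_mat)
qed

lemma det_mat: "det (mat a :: 'a::comm_ring_1^'n^'n) = a ^ CARD('n)"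
  by (subst det_diagonal) (auto simp: mat_def)

lemma pos_def_matrix_mat: "a > 0 \<Longrightarrow> pos_def_matrix (mat a :: real^'n^'n)"
  by (simp add: pos_def_matrix_def mat_mult_vector)

lemma has_bochner_integral_normal_density:
  "\<sigma> > 0 \<Longrightarrow> has_bochner_integral lborel (normal_density \<mu> \<sigma>) 1"
  by (simp add: has_bochner_integral_iff)

lemma has_bochner_integral_normal_second_moment:
  assumes "\<sigma> > 0"
  shows "has_bochner_integral lborel (\<lambda>x. normal_density 0 \<sigma> x * x\<^sup>2) (\<sigma>\<^sup>2)"
  using normal_moment_even[OF assms, of 0 1] by simp

lemma has_bochner_integral_lborel_prod_Basis:
  fixes g :: "'a::euclidean_space \<Rightarrow> real \<Rightarrow> real"
  assumes int: "\<And>b. b \<in> Basis \<Longrightarrow> has_bochner_integral lborel (g b) (v b)"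
    and nonneg: "\<And>b x. b \<in> Basis \<Longrightarrow> 0 \<le> g b x"
  shows "has_bochner_integral lborel (\<lambda>z. \<Prod>b\<in>Basis. g b (z \<bullet> b)) (\<Prod>b\<in>Basis. v b)"
proof (rule has_bochner_integral_nn_integral)
  have [measurable]: "b \<in> Basis \<Longrightarrow> g b \<in> borel_measurable borel" for b
    using int[of b] by (auto dest: borel_measurable_has_bochner_integral)
  have v_nonneg: "0 \<le> v b" if "b \<in> Basis" for b
  proof -
    have "v b = integral\<^sup>L lborel (g b)"
      using int[OF that] by (simp add: has_bochner_integral_integral_eq)
    then show ?thesis
      by (simp add: nonneg[OF that])
  qed
  show "(\<lambda>z. \<Prod>b\<in>Basis. g b (z \<bullet> b)) \<in> borel_measurable lborel"
    by (simp add: borel_measurable_prod)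
  show "AE z in lborel. 0 \<le> (\<Prod>b\<in>Basis. g b (z \<bullet> b))"
    by (simp add: nonneg prod_nonneg)
  show "0 \<le> (\<Prod>b\<in>Basis. v b)"
    by (simp add: v_nonneg prod_nonneg)
  have "(\<integral>\<^sup>+z. (\<Prod>b\<in>Basis. ennreal (g b (z \<bullet> b))) \<partial>lborel)
      = (\<Prod>b\<in>Basis. \<integral>\<^sup>+x. ennreal (g b x) \<partial>lborel)"
    by (rule nn_integral_lborel_prod) auto
  also have "\<dots> = (\<Prod>b\<in>Basis. ennreal (v b))"
  proof (rule prod.cong)
    show "(\<integral>\<^sup>+x. g b x \<partial>lborel) = ennreal (v b)" if "b \<in> Basis" for b
      using int[OF that] nonneg[OF that]
      by (simp add: nn_integral_eq_integral has_bochner_integral_iff)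
  qed simp
  finally have "(\<integral>\<^sup>+z. (\<Prod>b\<in>Basis. ennreal (g b (z \<bullet> b))) \<partial>lborel) = (\<Prod>b\<in>Basis. ennreal (v b))" .
  then show "(\<integral>\<^sup>+z. ennreal (\<Prod>b\<in>Basis. g b (z \<bullet> b)) \<partial>lborel) = ennreal (\<Prod>b\<in>Basis. v b)"
    by (simp add: prod_ennreal nonneg v_nonneg)
qed

lemma normal_density_mv_isotropic:
  fixes z :: "real^'n"
  assumes "a > 0"
  shows "normal_density_mv (0, mat a) z = exp (- (z \<bullet> z) / (2 * a)) / sqrt ((2 * pi * a) ^ CARD('n))"
proof -
  have "z \<bullet> (matrix_inv (mat a) *v z) = (z \<bullet> z) / a"
    using assms by (simp add: matrix_inv_mat mat_mult_vector divide_inverse mult.commute)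
  then show ?thesis
    by (simp add: normal_density_mv_def det_mat power_mult_distrib)
qed

lemma normal_density_mv_isotropic_prod:
  fixes z :: "real^'n"
  assumes "a > 0"
  shows "normal_density_mv (0, mat a) z = (\<Prod>b\<in>Basis. normal_density 0 (sqrt a) (z \<bullet> b))"
proof -
  have "(\<Prod>b\<in>Basis. normal_density 0 (sqrt a) (z \<bullet> b))
      = (\<Prod>b\<in>(Basis::(real^'n) set). 1 / sqrt (2 * pi * a)) * (\<Prod>b\<in>Basis. exp (- (z \<bullet> b)\<^sup>2 / (2 * a)))"
    unfolding normal_density_def prod.distrib using assms by (simp add: power2_eq_square)
  also have "\<dots> = exp (\<Sum>b\<in>Basis. - (z \<bullet> b)\<^sup>2 / (2 * a)) / sqrt ((2 * pi * a) ^ CARD('n))"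
    by (simp add: exp_sum real_sqrt_power power_one_over)
  also have "(\<Sum>b\<in>Basis. - (z \<bullet> b)\<^sup>2 / (2 * a)) = - (z \<bullet> z) / (2 * a)"
    by (subst (2) euclidean_inner) (simp add: sum_negf sum_divide_distrib power2_eq_square)
  finally show ?thesis
    using assms by (simp add: normal_density_mv_isotropic)
qed

lemma has_bochner_integral_normal_density_mv_isotropic:
  assumes "a > 0"
  shows "has_bochner_integral lborel (normal_density_mv (0::real^'n, mat a)) 1"
proof -
  have "normal_density_mv (0::real^'n, mat a) = (\<lambda>z. \<Prod>b\<in>Basis. normal_density 0 (sqrt a) (z \<bullet> b))"
    using assms by (simp add: fun_eq_iff normal_density_mv_isotropic_prod)
  then show ?thesis
    using has_bochner_integral_lborel_prod_Basis[of "\<lambda>_. normal_density 0 (sqrt a)" "\<lambda>_. 1"] assms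
    by (simp add: has_bochner_integral_normal_density)
qed

text \<open>Write \<open>z \<bullet> z\<close> as \<open>\<Sum>\<^sub>b' (z \<bullet> b')\<^sup>2\<close>; each summand is a coordinatewise product in which the
  \<open>b'\<close>-th factor carries the second moment.\<close>
lemma has_bochner_integral_normal_density_mv_isotropic_second_moment:
  fixes a :: real
  assumes a: "a > 0"
  shows "has_bochner_integral lborel (\<lambda>z::real^'n. normal_density_mv (0, mat a) z * (z \<bullet> z))
      (CARD('n) * a)"
proof -
  define g where "g b' b x = normal_density 0 (sqrt a) x * (if b = b' then x\<^sup>2 else 1)"
    for b' b :: "real^'n" and x
  have "has_bochner_integral lborel (\<lambda>z. \<Prod>b\<in>Basis. g b' b (z \<bullet> b))
      (\<Prod>b\<in>(Basis::(real^'n) set). if b = b' then a else 1)" for b'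
    by (rule has_bochner_integral_lborel_prod_Basis)
      (use a has_bochner_integral_normal_second_moment[of "sqrt a"] in
        \<open>auto simp: g_def has_bochner_integral_normal_density\<close>)
  then have "has_bochner_integral lborel (\<lambda>z. \<Sum>b'\<in>Basis. \<Prod>b\<in>Basis. g b' b (z \<bullet> b))
      (\<Sum>b'\<in>(Basis::(real^'n) set). \<Prod>b\<in>Basis. if b = b' then a else 1)"
    by (rule has_bochner_integral_sum)
  moreover have "(\<Sum>b'\<in>Basis. \<Prod>b\<in>Basis. g b' b (z \<bullet> b)) = normal_density_mv (0, mat a) z * (z \<bullet> z)"
    for z :: "real^'n"
  proof -
    have "(\<Sum>b'\<in>Basis. \<Prod>b\<in>Basis. g b' b (z \<bullet> b))
        = (\<Sum>b'\<in>Basis. (\<Prod>b\<in>Basis. normal_density 0 (sqrt a) (z \<bullet> b)) * (z \<bullet> b')\<^sup>2)"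
      by (rule sum.cong) (auto simp: g_def prod.distrib)
    also have "\<dots> = (\<Prod>b\<in>Basis. normal_density 0 (sqrt a) (z \<bullet> b)) * (z \<bullet> z)"
      by (subst (2) euclidean_inner) (simp add: sum_distrib_left power2_eq_square)
    finally show ?thesis
      by (simp add: normal_density_mv_isotropic_prod[OF a])
  qed
  ultimately show ?thesis
    by simp
qed

lemma ln_normal_density_mv_isotropic:
  fixes z :: "real^'n"
  assumes "a > 0"
  shows "ln (normal_density_mv (0, mat a) z) = - (z \<bullet> z) / (2 * a) - CARD('n) / 2 * ln (2 * pi * a)"
  using assms by (simp add: normal_density_mv_isotropic ln_div ln_sqrt ln_realpow)

lemma ln_normal_density_mv_isotropic_ratio:
  fixes z :: "real^'n"
  assumes "a > 0" "b > 0"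
  shows "ln (normal_density_mv (0, mat a) z / normal_density_mv (0, mat b) z)
    = CARD('n) / 2 * ln (b / a) + (1 / (2 * b) - 1 / (2 * a)) * (z \<bullet> z)"
proof -
  have "normal_density_mv (0, mat c) z \<noteq> 0" if "c > 0" for c
    using that by (simp add: normal_density_mv_isotropic)
  then have "ln (normal_density_mv (0, mat a) z / normal_density_mv (0, mat b) z)
      = ln (normal_density_mv (0, mat a) z) - ln (normal_density_mv (0, mat b) z)"
    using assms by (simp add: ln_div)
  also have "\<dots> = CARD('n) / 2 * (ln (2 * pi * b) - ln (2 * pi * a)) + (1 / (2 * b) - 1 / (2 * a)) * (z \<bullet> z)"
    using assms by (simp add: ln_normal_density_mv_isotropic algebra_simps diff_divide_distrib)
  also have "ln (2 * pi * b) - ln (2 * pi * a) = ln (b / a)"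
    using assms by (simp add: ln_mult ln_div)
  finally show ?thesis .
qed

lemma d_KL_normal_isotropic:
  assumes "a > 0" "b > 0"
  shows "d_KL (normal_density_mv (0::real^'n, mat a)) (normal_density_mv (0, mat b))
    = CARD('n) / 2 * (a / b - 1 - ln (a / b))"
proof -
  let ?f = "normal_density_mv (0::real^'n, mat a)" and ?g = "normal_density_mv (0::real^'n, mat b)"
  have integrand: "(\<lambda>z. ?f z * ln (?f z / ?g z))
      = (\<lambda>z. CARD('n) / 2 * ln (b / a) * ?f z + (1 / (2 * b) - 1 / (2 * a)) * (?f z * (z \<bullet> z)))"
    using assms by (simp add: fun_eq_iff ln_normal_density_mv_isotropic_ratio algebra_simps)
  have "d_KL ?f ?g = CARD('n) / 2 * ln (b / a) * 1 + (1 / (2 * b) - 1 / (2 * a)) * (CARD('n) * a)"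
    unfolding d_KL_def integrand using assms
    by (intro has_bochner_integral_integral_eq has_bochner_integral_add has_bochner_integral_mult_right
        has_bochner_integral_normal_density_mv_isotropic
        has_bochner_integral_normal_density_mv_isotropic_second_moment) simp_all
  also have "\<dots> = CARD('n) / 2 * (a / b - 1 - ln (a / b))"
    using assms by (simp add: ln_div field_simps)
  finally show ?thesis .
qed

lemma d_Jeff_normal_isotropic:
  assumes "a > 0" "b > 0"
  shows "d_Jeff (normal_density_mv (0::real^'n, mat a)) (normal_density_mv (0, mat b))
    = CARD('n) / 2 * (a / b + b / a - 2)"
  using assms by (simp add: d_Jeff_def d_KL_normal_isotropic ln_div field_simps)

theorem propositionA1:
  shows "\<not> cond_pos_def (normal_params :: ((real^'n::finite) \<times> (real^'n^'n)) set)
           (\<lambda>p q. - d_Jeff (normal_density_mv p) (normal_density_mv q))"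
proof
  assume cpd: "cond_pos_def (normal_params :: ((real^'n::finite) \<times> (real^'n^'n)) set)
           (\<lambda>p q. - d_Jeff (normal_density_mv p) (normal_density_mv q))"
  define y :: "nat \<Rightarrow> (real^'n) \<times> (real^'n^'n)" where "y i = (0, mat (2 ^ i))" for i
  define c :: "nat \<Rightarrow> real" where "c i = [1, -2, 1] ! i" for i
  have "\<forall>i<3. y i \<in> normal_params"
    by (simp add: y_def normal_params_def pos_def_matrix_mat)
  moreover have "(\<Sum>i<3. c i) = 0"
    by (simp add: c_def numeral_3_eq_3)
  ultimately have "0 \<le> (\<Sum>i<3. \<Sum>j<3. c i * c j * - d_Jeff (normal_density_mv (y i)) (normal_density_mv (y j)))"
    using cpd unfolding cond_pos_def_def by blast
  also have "\<dots> = - real CARD('n) / 4"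
  proof -
    have d_Jeff_y: "d_Jeff (normal_density_mv (y i)) (normal_density_mv (y j))
        = CARD('n) / 2 * (2 ^ i / 2 ^ j + 2 ^ j / 2 ^ i - 2)" for i j
      by (simp add: y_def d_Jeff_normal_isotropic)
    show ?thesis
      unfolding d_Jeff_y by (simp add: c_def numeral_3_eq_3 field_simps)
  qed
  finally show False
    by simp
qed

end
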